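(* Let $V\subset\mathbb{R}^{n_s}$ be an oriented open set, $\mathcal{G}$ a Riemannian metric on $V$, $\mathcal{J}$ a taming map on $V$, and $\mathcal{N}=\mu(\mathcal{J})$. Then $$\{(f,\mathfrak{A})\in\mathrm{Iso}(V,\mathcal{G})\times\mathrm{Sp}(2n_v,\mathbb{R}):\mathfrak{A}\cdot\mathcal{N}=\mathcal{N}\circ f\}=\{(f,\mathfrak{A})\in\mathrm{Iso}(V,\mathcal{G})\times\mathrm{Sp}(2n_v,\mathbb{R}):\mathfrak{A}\mathcal{J}\mathfrak{A}^{-1}=\mathcal{J}\circ f\},$$ so that the identity map gives a canonical isomorphism of groups $\mathrm{U}(\mathcal{G},\mathcal{N})\cong\mathrm{U}(\mathcal{G},\mathcal{J})$ between these two sets (with componentwise composition).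
   Context: $\mathrm{Iso}(V,\mathcal{G})$ is the isometry group of $(V,\mathcal{G})$. The standard symplectic form $\omega$ on $\mathbb{R}^{2n_v}$ has matrix $\begin{pmatrix}0&-\mathrm{Id}\\ \mathrm{Id}&0\end{pmatrix}$ in the canonical basis; $\mathrm{Sp}(2n_v,\mathbb{R})$ is its stabilizer. A taming map is a smooth $\mathcal{J}\colon V\to\mathrm{Aut}(\mathbb{R}^{2n_v})$ whose values are complex structures $J$ with $\omega(J\cdot,J\cdot)=\omega$ and $\omega(\xi,J\xi)>0$ for $\xi\neq0$; every taming map is uniquely of the form $\begin{pmatrix}-\mathcal{I}^{-1}\mathcal{R} & \mathcal{I}^{-1}\\ -\mathcal{I}-\mathcal{R}\mathcal{I}^{-1}\mathcal{R} & \mathcal{R}\mathcal{I}^{-1}\end{pmatrix}$ with smooth $\mathcal{R},\mathcal{I}\colon V\to\mathrm{Sym}(n_v,\mathbb{R})$, $\mathcal{I}$ pointwise positive definite, and $\mu(\mathcal{J})=\mathcal{R}+i\mathcal{I}\colon V\to\mathbb{SH}(n_v)$ (the Siegel upper space of complex symmetric matrices with positive definite imaginary part). For $\mathfrak{A}=\begin{pmatrix}a&b\\ c&d\end{pmatrix}$ in $n_v\times n_v$ blocks, $\mathfrak{A}\cdot\tau=(c+d\tau)(a+b\tau)^{-1}$, applied pointwise to $\mathcal{N}$. *)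

theory Defs
  imports "HOL-Analysis.Analysis"
begin

definition partial_deriv :: "'n::finite \<Rightarrow> (real^'n \<Rightarrow> real) \<Rightarrow> real^'n \<Rightarrow> real" where
  "partial_deriv i g x = frechet_derivative g (at x) (axis i 1)"

fun iter_partial :: "'n::finite list \<Rightarrow> (real^'n \<Rightarrow> real) \<Rightarrow> real^'n \<Rightarrow> real" where
  "iter_partial [] g = g"
| "iter_partial (i # is) g = partial_deriv i (iter_partial is g)"

definition smooth_on :: "(real^'n::finite) set \<Rightarrow> (real^'n \<Rightarrow> real) \<Rightarrow> bool" where
  "smooth_on V g \<longleftrightarrow> (\<forall>is. iter_partial is g differentiable_on V)"

definition smooth_vec_on :: "(real^'n::finite) set \<Rightarrow> (real^'n \<Rightarrow> real^'k::finite) \<Rightarrow> bool" where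
  "smooth_vec_on V f \<longleftrightarrow> (\<forall>k. smooth_on V (\<lambda>x. f x $ k))"

definition smooth_mat_on :: "(real^'n::finite) set \<Rightarrow> (real^'n \<Rightarrow> real^'p::finite^'q::finite) \<Rightarrow> bool" where
  "smooth_mat_on V M \<longleftrightarrow> (\<forall>i j. smooth_on V (\<lambda>x. M x $ i $ j))"

definition pos_def_mat :: "real^'n::finite^'n \<Rightarrow> bool" where
  "pos_def_mat S \<longleftrightarrow> (\<forall>v. v \<noteq> 0 \<longrightarrow> v \<bullet> (S *v v) > 0)"

definition riemannian_metric :: "(real^'n::finite) set \<Rightarrow> (real^'n \<Rightarrow> real^'n^'n) \<Rightarrow> bool" where
  "riemannian_metric V G \<longleftrightarrow> smooth_mat_on V G \<and>
     (\<forall>x\<in>V. transpose (G x) = G x \<and> pos_def_mat (G x))"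

definition jac :: "(real^'n::finite \<Rightarrow> real^'m::finite) \<Rightarrow> real^'n \<Rightarrow> real^'n^'m" where
  "jac f x = matrix (frechet_derivative f (at x))"

definition diffeo_on :: "(real^'n::finite) set \<Rightarrow> (real^'n \<Rightarrow> real^'n) \<Rightarrow> bool" where
  "diffeo_on V f \<longleftrightarrow> bij_betw f V V \<and> smooth_vec_on V f \<and> smooth_vec_on V (inv_into V f)"

definition Iso :: "(real^'n::finite) set \<Rightarrow> (real^'n \<Rightarrow> real^'n^'n) \<Rightarrow> (real^'n \<Rightarrow> real^'n) set" where
  "Iso V G = {f. diffeo_on V f \<and>
     (\<forall>x\<in>V. transpose (jac f x) ** G (f x) ** jac f x = G x)}"

text \<open>The canonical basis of R^(2n_v) is indexed by 'm + 'm, with the first n_v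
  coordinates being Inl and the last n_v being Inr.\<close>


definition omega_mat :: "real^('m::finite + 'm)^('m + 'm)" where
  "omega_mat = (\<chi> i j. (case (i, j) of
      (Inl a, Inr b) \<Rightarrow> (if a = b then -1 else 0)
    | (Inr a, Inl b) \<Rightarrow> (if a = b then 1 else 0)
    | _ \<Rightarrow> 0))"

definition omega :: "real^('m::finite + 'm) \<Rightarrow> real^('m + 'm) \<Rightarrow> real" where
  "omega u v = u \<bullet> (omega_mat *v v)"

definition Sp :: "(real^('m::finite + 'm)^('m + 'm)) set" where
  "Sp = {A. \<forall>u v. omega (A *v u) (A *v v) = omega u v}"

definition blk_a :: "'a^('m::finite + 'm)^('m + 'm) \<Rightarrow> 'a^'m^'m" where
  "blk_a M = (\<chi> i j. M $ Inl i $ Inl j)"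
definition blk_b :: "'a^('m::finite + 'm)^('m + 'm) \<Rightarrow> 'a^'m^'m" where
  "blk_b M = (\<chi> i j. M $ Inl i $ Inr j)"
definition blk_c :: "'a^('m::finite + 'm)^('m + 'm) \<Rightarrow> 'a^'m^'m" where
  "blk_c M = (\<chi> i j. M $ Inr i $ Inl j)"
definition blk_d :: "'a^('m::finite + 'm)^('m + 'm) \<Rightarrow> 'a^'m^'m" where
  "blk_d M = (\<chi> i j. M $ Inr i $ Inr j)"

definition block_mat :: "'a^'m::finite^'m \<Rightarrow> 'a^'m^'m \<Rightarrow> 'a^'m^'m \<Rightarrow> 'a^'m^'m \<Rightarrow> 'a^('m + 'm)^('m + 'm)" where
  "block_mat a b c d = (\<chi> i j. (case (i, j) of
      (Inl p, Inl q) \<Rightarrow> a $ p $ q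
    | (Inl p, Inr q) \<Rightarrow> b $ p $ q
    | (Inr p, Inl q) \<Rightarrow> c $ p $ q
    | (Inr p, Inr q) \<Rightarrow> d $ p $ q))"

definition tame_cs :: "real^('m::finite + 'm)^('m + 'm) \<Rightarrow> bool" where
  "tame_cs J \<longleftrightarrow> J ** J = - mat 1 \<and>
     (\<forall>u v. omega (J *v u) (J *v v) = omega u v) \<and>
     (\<forall>\<xi>. \<xi> \<noteq> 0 \<longrightarrow> omega \<xi> (J *v \<xi>) > 0)"

definition taming_map :: "(real^'n::finite) set \<Rightarrow> (real^'n \<Rightarrow> real^('m::finite + 'm)^('m + 'm)) \<Rightarrow> bool" where
  "taming_map V J \<longleftrightarrow> smooth_mat_on V J \<and> (\<forall>x\<in>V. invertible (J x) \<and> tame_cs (J x))"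

definition Re_mat :: "complex^'m::finite^'m \<Rightarrow> real^'m^'m" where
  "Re_mat t = (\<chi> i j. Re (t $ i $ j))"
definition Im_mat :: "complex^'m::finite^'m \<Rightarrow> real^'m^'m" where
  "Im_mat t = (\<chi> i j. Im (t $ i $ j))"
definition cmat :: "real^'p::finite^'q::finite \<Rightarrow> complex^'p^'q" where
  "cmat M = (\<chi> i j. complex_of_real (M $ i $ j))"

definition SH :: "(complex^'m::finite^'m) set" where
  "SH = {t. transpose t = t \<and> pos_def_mat (Im_mat t)}"

definition taming_form :: "real^'m::finite^'m \<Rightarrow> real^'m^'m \<Rightarrow> real^('m + 'm)^('m + 'm)" where
  "taming_form R I = block_mat (- (matrix_inv I ** R)) (matrix_inv I)
      (- I - R ** matrix_inv I ** R) (R ** matrix_inv I)"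

definition mu :: "(real^'n \<Rightarrow> real^('m::finite + 'm)^('m + 'm)) \<Rightarrow> real^'n \<Rightarrow> complex^'m^'m" where
  "mu J x = (THE t. t \<in> SH \<and> J x = taming_form (Re_mat t) (Im_mat t))"

definition sp_act :: "real^('m::finite + 'm)^('m + 'm) \<Rightarrow> complex^'m^'m \<Rightarrow> complex^'m^'m" where
  "sp_act A t = (cmat (blk_c A) + cmat (blk_d A) ** t) ** matrix_inv (cmat (blk_a A) + cmat (blk_b A) ** t)"

end

theory Submission
  imports Defs
begin

(* For \<tau> = R + iI in the Siegel space, the complex structure J\<^sub>\<tau> = taming_form R I has the graph
   {(z, \<tau> z)} of \<tau> as its +i-eigenspace: in real terms J\<^sub>\<tau> maps (0, I z) to (z, R z).  Every taming
   complex structure arises in this way from exactly one \<tau>, which is \<mu>(J).  A symplectic matrix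
   A = [a b; c d] maps the graph of \<tau> onto the graph of (c + d\<tau>)(a + b\<tau>)\<inverse>, the matrix a + b\<tau> being
   invertible because the graph is a positive Lagrangian subspace.  Since a complex structure is
   determined by its +i-eigenspace, A\<cdot>\<tau> = \<tau>' holds iff A J\<^sub>\<tau> A\<inverse> = J\<^sub>\<tau>'.  Applied pointwise to
   \<tau> = \<N>(x) and \<tau>' = \<N>(f x) this identifies the two sets. *)

lemma matrix_inv_right:
  fixes A :: "'a::field^'n^'n"
  assumes "invertible A"
  shows "A ** matrix_inv A = mat 1"
  using assms someI_ex[of "\<lambda>A'. A ** A' = mat 1 \<and> A' ** A = mat 1"]
  unfolding invertible_def matrix_inv_def by blast

lemma matrix_inv_left:
  fixes A :: "'a::field^'n^'n"
  assumes "invertible A"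
  shows "matrix_inv A ** A = mat 1"
  using assms someI_ex[of "\<lambda>A'. A ** A' = mat 1 \<and> A' ** A = mat 1"]
  unfolding invertible_def matrix_inv_def by blast

lemma invertible_matrix_inv:
  fixes A :: "'a::field^'n^'n"
  assumes "invertible A"
  shows "invertible (matrix_inv A)"
  using assms invertible_def matrix_inv_left matrix_inv_right by blast

lemma matrix_inv_matrix_inv:
  fixes A :: "'a::field^'n^'n"
  assumes "invertible A"
  shows "matrix_inv (matrix_inv A) = A"
proof -
  have "matrix_inv (matrix_inv A) = matrix_inv (matrix_inv A) ** (matrix_inv A ** A)"
    by (simp add: matrix_inv_left[OF assms])
  also have "\<dots> = A"
    by (simp add: matrix_mul_assoc matrix_inv_left[OF invertible_matrix_inv[OF assms]])
  finally show ?thesis .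
qed

lemma mult_matrix_inv_eq_iff:
  fixes M :: "'a::field^'n^'n"
  assumes "invertible M"
  shows "X ** matrix_inv M = Y \<longleftrightarrow> X = Y ** M"
proof
  assume "X ** matrix_inv M = Y"
  then have "X ** (matrix_inv M ** M) = Y ** M"
    by (simp add: matrix_mul_assoc)
  then show "X = Y ** M"
    by (simp add: matrix_inv_left[OF assms])
qed (simp add: matrix_inv_right[OF assms] flip: matrix_mul_assoc)

lemma matrix_inv_vector_eq_iff:
  fixes M :: "'a::field^'n^'n"
  assumes "invertible M"
  shows "matrix_inv M *v u = x \<longleftrightarrow> u = M *v x"
  by (auto simp: matrix_vector_mul_assoc matrix_inv_left[OF assms] matrix_inv_right[OF assms])

lemma invertible_iff_ker:
  fixes A :: "'a::field^'n^'n"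
  shows "invertible A \<longleftrightarrow> (\<forall>x. A *v x = 0 \<longrightarrow> x = 0)"
  using invertible_left_inverse matrix_left_invertible_ker by blast

lemma pos_def_mat_nonneg:
  "pos_def_mat S \<Longrightarrow> 0 \<le> v \<bullet> (S *v v)"
  unfolding pos_def_mat_def by (cases "v = 0") (auto intro: less_imp_le)

lemma pos_def_mat_invertible:
  "pos_def_mat S \<Longrightarrow> invertible S"
  unfolding invertible_iff_ker pos_def_mat_def by (metis inner_zero_right less_irrefl)

lemma transpose_eq_iff_inner_commute:
  fixes M :: "real^'n^'n"
  shows "transpose M = M \<longleftrightarrow> (\<forall>x y. x \<bullet> (M *v y) = y \<bullet> (M *v x))"
proof
  assume "transpose M = M"
  then show "\<forall>x y. x \<bullet> (M *v y) = y \<bullet> (M *v x)"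
    by (metis dot_lmul_matrix inner_commute vector_transpose_matrix)
next
  assume sym: "\<forall>x y. x \<bullet> (M *v y) = y \<bullet> (M *v x)"
  have "M $ i $ j = M $ j $ i" for i j
    using sym[rule_format, of "axis i 1" "axis j 1"]
    by (simp add: matrix_vector_mult_basis inner_axis' column_def)
  then show "transpose M = M"
    by (simp add: transpose_def vec_eq_iff)
qed

section \<open>Block decomposition of \<real>^(2n) and the symplectic form\<close>

definition vstack :: "real^'m::finite \<Rightarrow> real^'m \<Rightarrow> real^('m + 'm)" where
  "vstack x y = (\<chi> i. case i of Inl p \<Rightarrow> x $ p | Inr p \<Rightarrow> y $ p)"

lemma vstack_nth [simp]: "vstack x y $ Inl p = x $ p" "vstack x y $ Inr p = y $ p"
  by (simp_all add: vstack_def)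

lemma vstack_surj: "\<exists>x y. v = vstack x y"
  by (rule exI[of _ "\<chi> p. v $ Inl p"], rule exI[of _ "\<chi> p. v $ Inr p"])
    (simp add: vec_eq_iff vstack_def split: sum.split)

lemma vstack_eq_iff [simp]: "vstack x y = vstack x' y' \<longleftrightarrow> x = x' \<and> y = y'"
  by (metis vec_eq_iff vstack_nth)

lemma vstack_zero [simp]: "vstack 0 0 = 0"
  and vstack_add: "vstack x y + vstack x' y' = vstack (x + x') (y + y')"
  and vstack_diff: "vstack x y - vstack x' y' = vstack (x - x') (y - y')"
  and vstack_neg: "- vstack x y = vstack (- x) (- y)"
  by (simp_all add: vec_eq_iff vstack_def split: sum.split)

lemma sum_UNIV_Plus:
  "(\<Sum>i\<in>(UNIV::('m::finite + 'm) set). g i) = (\<Sum>p\<in>UNIV. g (Inl p)) + (\<Sum>p\<in>UNIV. g (Inr p))"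
  using sum.Plus[of "UNIV::'m set" "UNIV::'m set" g] by (simp add: comp_def)

lemma inner_vstack: "vstack x y \<bullet> vstack x' y' = x \<bullet> x' + y \<bullet> y'"
  by (simp add: inner_vec_def sum_UNIV_Plus)

lemma matrix_vector_mult_vstack:
  "(M::real^('m::finite + 'm)^('m + 'm)) *v vstack x y
     = vstack (blk_a M *v x + blk_b M *v y) (blk_c M *v x + blk_d M *v y)"
  by (simp add: vec_eq_iff matrix_vector_mult_def sum_UNIV_Plus vstack_def
      blk_a_def blk_b_def blk_c_def blk_d_def split: sum.split)

lemma matrix_vector_mult_neg_left [simp]: "(- A :: 'a::ring_1^'n^'k) *v x = - (A *v x)"
  and matrix_vector_mult_neg_right [simp]: "A *v (- x) = - (A *v x)"
  by (simp_all add: vec_eq_iff matrix_vector_mult_def sum_negf)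

lemma blk_block_mat [simp]:
  "blk_a (block_mat a b c d) = a" "blk_b (block_mat a b c d) = b"
  "blk_c (block_mat a b c d) = c" "blk_d (block_mat a b c d) = d"
  by (simp_all add: vec_eq_iff blk_a_def blk_b_def blk_c_def blk_d_def block_mat_def)

lemma omega_vstack:
  fixes x y x' y' :: "real^'m::finite"
  shows "omega (vstack x y) (vstack x' y') = y \<bullet> x' - x \<bullet> y'"
proof -
  let ?\<Omega> = "omega_mat :: real^('m + 'm)^('m + 'm)"
  have "blk_a ?\<Omega> = 0" "blk_b ?\<Omega> = - mat 1" "blk_c ?\<Omega> = mat 1" "blk_d ?\<Omega> = 0"
    by (simp_all add: vec_eq_iff blk_a_def blk_b_def blk_c_def blk_d_def omega_mat_def mat_def)
  then have "?\<Omega> *v vstack x' y' = vstack (- y') x'"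
    by (simp add: matrix_vector_mult_vstack)
  then show ?thesis
    by (simp add: omega_def inner_vstack)
qed

lemma omega_antisym: "omega u v = - omega v u"
  using vstack_surj[of u] vstack_surj[of v] by (auto simp: omega_vstack inner_commute)

section \<open>Taming forms and the map \<mu>\<close>

lemma taming_form_apply:
  "taming_form R I *v vstack x y
     = vstack (matrix_inv I *v (y - R *v x)) (R *v (matrix_inv I *v (y - R *v x)) - I *v x)"
  by (simp add: taming_form_def matrix_vector_mult_vstack matrix_vector_mult_diff_rdistrib
      matrix_vector_mult_diff_distrib matrix_vector_mult_add_rdistrib algebra_simps
      flip: matrix_vector_mul_assoc)

lemma taming_form_apply_eq_iff:
  assumes "invertible I"
  shows "taming_form R I *v vstack p q = vstack x y \<longleftrightarrow> q = R *v p + I *v x \<and> y = R *v x - I *v p"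
  using matrix_inv_vector_eq_iff[OF assms, of "q - R *v p" x]
  by (auto simp: taming_form_apply algebra_simps)

lemma taming_form_apply_twice:
  assumes "invertible I"
  shows "taming_form R I *v (taming_form R I *v v) = - v"
proof -
  obtain p q where v: "v = vstack p q"
    using vstack_surj by blast
  obtain x y where Jv: "taming_form R I *v v = vstack x y"
    using vstack_surj by blast
  then have "q = R *v p + I *v x" "y = R *v x - I *v p"
    by (simp_all add: v taming_form_apply_eq_iff[OF assms])
  then have "taming_form R I *v vstack x y = vstack (- p) (- q)"
    by (simp add: taming_form_apply_eq_iff[OF assms])
  then show ?thesis
    unfolding Jv by (simp add: v vstack_neg)
qed

lemma taming_form_graph:
  assumes "invertible I"
  shows "taming_form R I *v vstack 0 (I *v z) = vstack z (R *v z)"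
  by (simp add: taming_form_apply_eq_iff[OF assms])

lemma complex_mat_eq_iff: "t = s \<longleftrightarrow> Re_mat t = Re_mat s \<and> Im_mat t = Im_mat s"
  by (auto simp: Re_mat_def Im_mat_def vec_eq_iff complex_eq_iff)

lemma Re_mat_transpose [simp]: "Re_mat (transpose t) = transpose (Re_mat t)"
  and Im_mat_transpose [simp]: "Im_mat (transpose t) = transpose (Im_mat t)"
  by (simp_all add: Re_mat_def Im_mat_def transpose_def)

lemma SH_iff:
  "t \<in> SH \<longleftrightarrow>
     transpose (Re_mat t) = Re_mat t \<and> transpose (Im_mat t) = Im_mat t \<and> pos_def_mat (Im_mat t)"
  by (simp add: SH_def complex_mat_eq_iff[of "transpose t"])

lemma taming_form_inj_on_SH:
  assumes "t \<in> SH" "s \<in> SH"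
    and eq: "taming_form (Re_mat t) (Im_mat t) = taming_form (Re_mat s) (Im_mat s)"
  shows "t = s"
proof -
  have inv: "invertible (Im_mat t)" "invertible (Im_mat s)"
    using assms(1,2) by (simp_all add: SH_iff pos_def_mat_invertible)
  have "matrix_inv (Im_mat t) = matrix_inv (Im_mat s)"
    using arg_cong[OF eq, of blk_b] by (simp add: taming_form_def)
  then have Im_eq: "Im_mat t = Im_mat s"
    by (metis inv matrix_inv_matrix_inv)
  have "Re_mat t ** matrix_inv (Im_mat t) = Re_mat s ** matrix_inv (Im_mat t)"
    using arg_cong[OF eq, of blk_d] by (simp add: taming_form_def Im_eq)
  then have "Re_mat t = Re_mat s"
    by (simp add: mult_matrix_inv_eq_iff[OF inv(1)] matrix_inv_left[OF inv(1)]
        flip: matrix_mul_assoc)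
  with Im_eq show ?thesis
    by (simp add: complex_mat_eq_iff)
qed

lemma symmetric_pos_def_matrix_inv:
  fixes S :: "real^'n^'n"
  assumes "transpose S = S" "pos_def_mat S"
  shows "transpose (matrix_inv S) = matrix_inv S" "pos_def_mat (matrix_inv S)"
proof -
  have inv: "invertible S"
    using assms(2) by (rule pos_def_mat_invertible)
  have S_inv: "S *v (matrix_inv S *v z) = z" for z
    by (simp add: matrix_vector_mul_assoc matrix_inv_right[OF inv])
  have sym: "x \<bullet> (S *v y) = y \<bullet> (S *v x)" for x y
    using assms(1) transpose_eq_iff_inner_commute by blast
  show "transpose (matrix_inv S) = matrix_inv S"
    unfolding transpose_eq_iff_inner_commute
    by (metis S_inv sym inner_commute)
  show "pos_def_mat (matrix_inv S)"
    unfolding pos_def_mat_def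
  proof (intro allI impI)
    fix v :: "real^'n"
    assume "v \<noteq> 0"
    then have "matrix_inv S *v v \<noteq> 0"
      by (metis S_inv matrix_vector_mult_0_right)
    with assms(2) show "v \<bullet> (matrix_inv S *v v) > 0"
      unfolding pos_def_mat_def by (metis S_inv inner_commute)
  qed
qed

lemma tame_cs_apply_twice:
  assumes "tame_cs J"
  shows "J *v (J *v v) = - v"
  using assms by (simp add: tame_cs_def matrix_vector_mul_assoc)

lemma tame_cs_omega_sym:
  assumes "tame_cs J"
  shows "omega u (J *v v) = omega v (J *v u)"
proof -
  have "omega u (J *v v) = omega (J *v u) (J *v (J *v v))"
    using assms by (simp add: tame_cs_def)
  also have "\<dots> = - omega (J *v u) v"
    by (simp add: tame_cs_apply_twice[OF assms] omega_def)
  also have "\<dots> = omega v (J *v u)"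
    by (simp add: omega_antisym[of v])
  finally show ?thesis .
qed

lemma tame_cs_blk_b_symmetric:
  assumes "tame_cs J"
  shows "transpose (blk_b J) = blk_b J"
  unfolding transpose_eq_iff_inner_commute
  using tame_cs_omega_sym[OF assms, of "vstack 0 _" "vstack 0 _"]
  by (simp add: matrix_vector_mult_vstack omega_vstack)

lemma tame_cs_inner_blk_d:
  assumes "tame_cs J"
  shows "x \<bullet> (blk_d J *v y) = - (y \<bullet> (blk_a J *v x))"
  using tame_cs_omega_sym[OF assms, of "vstack x 0" "vstack 0 y"]
  by (simp add: matrix_vector_mult_vstack omega_vstack)

lemma tame_cs_pos_def_blk_b:
  fixes J :: "real^('m::finite + 'm)^('m + 'm)"
  assumes "tame_cs J"
  shows "pos_def_mat (blk_b J)"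
  unfolding pos_def_mat_def
proof (intro allI impI)
  fix v :: "real^'m"
  assume "v \<noteq> 0"
  then have "vstack 0 v \<noteq> 0"
    by (metis vstack_eq_iff vstack_zero)
  with assms have "omega (vstack 0 v) (J *v vstack 0 v) > 0"
    by (simp add: tame_cs_def)
  then show "v \<bullet> (blk_b J *v v) > 0"
    by (simp add: matrix_vector_mult_vstack omega_vstack)
qed

lemma square_neg_one_blocks:
  fixes J :: "real^('m::finite + 'm)^('m + 'm)"
  assumes "\<And>v. J *v (J *v v) = - v"
  shows "blk_a J *v (blk_b J *v y) + blk_b J *v (blk_d J *v y) = 0"
    and "blk_c J *v (blk_b J *v y) + blk_d J *v (blk_d J *v y) = - y"
  using assms[of "vstack 0 y"] by (simp_all add: matrix_vector_mult_vstack vstack_neg)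

lemma taming_form_of_square_neg_one:
  fixes J :: "real^('m::finite + 'm)^('m + 'm)"
  assumes sq: "\<And>v. J *v (J *v v) = - v" and inv: "invertible (blk_b J)"
  defines "I \<equiv> matrix_inv (blk_b J)"
  defines "R \<equiv> blk_d J ** I"
  shows "taming_form R I = J"
proof (rule matrix_eq[THEN iffD2], intro allI)
  fix v :: "real^('m + 'm)"
  obtain p q where v: "v = vstack p q"
    using vstack_surj by blast
  have I_inv: "invertible I"
    unfolding I_def using inv by (rule invertible_matrix_inv)
  have jb_I: "blk_b J *v (I *v z) = z" and I_jb: "I *v (blk_b J *v z) = z" for z
    by (simp_all add: I_def matrix_vector_mul_assoc matrix_inv_left[OF inv] matrix_inv_right[OF inv])
  have R_z: "R *v z = blk_d J *v (I *v z)" for z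
    by (simp add: R_def matrix_vector_mul_assoc)
  have I_ja: "I *v (blk_a J *v z) = - (R *v z)" for z
    using arg_cong[OF square_neg_one_blocks(1)[OF sq, of "I *v z"], of "(*v) I"]
    by (simp add: jb_I I_jb R_z matrix_vector_right_distrib eq_neg_iff_add_eq_0)
  have jc: "blk_c J *v z = - (I *v z) - blk_d J *v (blk_d J *v (I *v z))" for z
    using square_neg_one_blocks(2)[OF sq, of "I *v z"] by (simp add: jb_I algebra_simps)
  have "q = R *v p + I *v (blk_a J *v p + blk_b J *v q)"
    by (simp add: matrix_vector_right_distrib I_ja I_jb)
  moreover have "blk_c J *v p + blk_d J *v q = R *v (blk_a J *v p + blk_b J *v q) - I *v p"
    by (simp add: matrix_vector_right_distrib R_z I_ja I_jb jc)
  ultimately show "taming_form R I *v v = J *v v"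
    unfolding v matrix_vector_mult_vstack[of J] taming_form_apply_eq_iff[OF I_inv] by blast
qed

lemma tame_cs_symmetric_blk_d_blk_b_inv:
  fixes J :: "real^('m::finite + 'm)^('m + 'm)"
  assumes "tame_cs J"
  shows "transpose (blk_d J ** matrix_inv (blk_b J)) = blk_d J ** matrix_inv (blk_b J)"
proof -
  define I where "I = matrix_inv (blk_b J)"
  define R where "R = blk_d J ** I"
  have jb_inv: "invertible (blk_b J)"
    using assms by (simp add: tame_cs_pos_def_blk_b pos_def_mat_invertible)
  have jb_I: "blk_b J *v (I *v z) = z" for z
    by (simp add: I_def matrix_vector_mul_assoc matrix_inv_right[OF jb_inv])
  have R_z: "R *v z = blk_d J *v (I *v z)" for z
    by (simp add: R_def matrix_vector_mul_assoc)
  have ja: "blk_a J *v z = - (blk_b J *v (R *v z))" for z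
    using square_neg_one_blocks(1)[OF tame_cs_apply_twice[OF assms], of "I *v z"]
    by (simp add: jb_I R_z eq_neg_iff_add_eq_0)
  have jb_inner: "a \<bullet> (blk_b J *v b) = b \<bullet> (blk_b J *v a)" for a b
    using tame_cs_blk_b_symmetric[OF assms] transpose_eq_iff_inner_commute by blast
  have "x \<bullet> (R *v y) = y \<bullet> (R *v x)" for x y
  proof -
    have "x \<bullet> (R *v y) = - ((I *v y) \<bullet> (blk_a J *v x))"
      using tame_cs_inner_blk_d[OF assms, of x "I *v y"] by (simp add: R_z)
    also have "\<dots> = (I *v y) \<bullet> (blk_b J *v (R *v x))"
      by (simp add: ja)
    also have "\<dots> = y \<bullet> (R *v x)"
      by (metis jb_inner jb_I inner_commute)
    finally show ?thesis .
  qed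
  then show ?thesis
    by (simp add: transpose_eq_iff_inner_commute R_def I_def)
qed

lemma tame_cs_eq_taming_form:
  fixes J :: "real^('m::finite + 'm)^('m + 'm)"
  assumes "tame_cs J"
  shows "\<exists>t\<in>SH. J = taming_form (Re_mat t) (Im_mat t)"
proof -
  define I where "I = matrix_inv (blk_b J)"
  define R where "R = blk_d J ** I"
  define t :: "complex^'m^'m" where "t = (\<chi> i j. Complex (R $ i $ j) (I $ i $ j))"
  have Re_t: "Re_mat t = R" and Im_t: "Im_mat t = I"
    by (simp_all add: t_def Re_mat_def Im_mat_def vec_eq_iff)
  have jb_sym: "transpose (blk_b J) = blk_b J" and jb_pos: "pos_def_mat (blk_b J)"
    using assms by (simp_all add: tame_cs_blk_b_symmetric tame_cs_pos_def_blk_b)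
  have "J = taming_form R I"
    unfolding R_def I_def
    using tame_cs_apply_twice[OF assms] jb_pos[THEN pos_def_mat_invertible]
    by (rule taming_form_of_square_neg_one[symmetric])
  moreover have "transpose I = I" "pos_def_mat I"
    unfolding I_def using jb_sym jb_pos by (rule symmetric_pos_def_matrix_inv)+
  then have "t \<in> SH"
    using tame_cs_symmetric_blk_d_blk_b_inv[OF assms]
    by (simp add: SH_iff Re_t Im_t R_def I_def)
  ultimately show ?thesis
    using Re_t Im_t by blast
qed

lemma mu_spec:
  assumes "tame_cs (J x)"
  shows "mu J x \<in> SH" "J x = taming_form (Re_mat (mu J x)) (Im_mat (mu J x))"
proof -
  have "\<exists>!t. t \<in> SH \<and> J x = taming_form (Re_mat t) (Im_mat t)"
    using tame_cs_eq_taming_form[OF assms] taming_form_inj_on_SH by metis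
  then have "mu J x \<in> SH \<and> J x = taming_form (Re_mat (mu J x)) (Im_mat (mu J x))"
    unfolding mu_def by (rule theI')
  then show "mu J x \<in> SH" "J x = taming_form (Re_mat (mu J x)) (Im_mat (mu J x))"
    by blast+
qed

section \<open>The action of the symplectic group on the Siegel space\<close>

definition Re_vec :: "complex^'m::finite \<Rightarrow> real^'m" where
  "Re_vec v = (\<chi> i. Re (v $ i))"

definition Im_vec :: "complex^'m::finite \<Rightarrow> real^'m" where
  "Im_vec v = (\<chi> i. Im (v $ i))"

lemma Re_mat_add [simp]: "Re_mat (P + Q) = Re_mat P + Re_mat Q"
  and Im_mat_add [simp]: "Im_mat (P + Q) = Im_mat P + Im_mat Q"
  and Re_mat_cmat [simp]: "Re_mat (cmat X) = X"
  and Im_mat_cmat [simp]: "Im_mat (cmat X) = 0"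
  by (simp_all add: Re_mat_def Im_mat_def cmat_def vec_eq_iff)

lemma Re_mat_mult [simp]: "Re_mat (P ** Q) = Re_mat P ** Re_mat Q - Im_mat P ** Im_mat Q"
  and Im_mat_mult [simp]: "Im_mat (P ** Q) = Re_mat P ** Im_mat Q + Im_mat P ** Re_mat Q"
  by (simp_all add: Re_mat_def Im_mat_def vec_eq_iff matrix_matrix_mult_def Re_sum Im_sum
      sum_subtractf[symmetric] sum.distrib[symmetric])

lemma Re_vec_mult: "Re_vec (P *v v) = Re_mat P *v Re_vec v - Im_mat P *v Im_vec v"
  and Im_vec_mult: "Im_vec (P *v v) = Re_mat P *v Im_vec v + Im_mat P *v Re_vec v"
  by (simp_all add: Re_vec_def Im_vec_def Re_mat_def Im_mat_def vec_eq_iff matrix_vector_mult_def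
      Re_sum Im_sum sum_subtractf[symmetric] sum.distrib[symmetric])

lemma Re_vec_zero [simp]: "Re_vec 0 = 0"
  and Im_vec_zero [simp]: "Im_vec 0 = 0"
  by (simp_all add: Re_vec_def Im_vec_def vec_eq_iff)

lemma complex_vec_eq_0: "Re_vec v = 0 \<Longrightarrow> Im_vec v = 0 \<Longrightarrow> v = 0"
  by (simp add: Re_vec_def Im_vec_def vec_eq_iff complex_eq_iff)

lemma Sp_invertible:
  assumes "A \<in> Sp"
  shows "invertible A"
  unfolding invertible_iff_ker
proof (intro allI impI)
  fix v
  assume Av: "A *v v = 0"
  obtain x y where v: "v = vstack x y"
    using vstack_surj by blast
  have "omega (vstack (- y) x) v = omega (A *v vstack (- y) x) (A *v v)"
    using assms by (simp add: Sp_def)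
  also have "\<dots> = 0"
    by (simp add: Av omega_def)
  finally have "x \<bullet> x + y \<bullet> y = 0"
    by (simp add: v omega_vstack)
  then show "v = 0"
    by (simp add: v add_nonneg_eq_0_iff)
qed

definition sp_den :: "real^('m::finite + 'm)^('m + 'm) \<Rightarrow> complex^'m^'m \<Rightarrow> complex^'m^'m" where
  "sp_den A t = cmat (blk_a A) + cmat (blk_b A) ** t"

definition sp_num :: "real^('m::finite + 'm)^('m + 'm) \<Rightarrow> complex^'m^'m \<Rightarrow> complex^'m^'m" where
  "sp_num A t = cmat (blk_c A) + cmat (blk_d A) ** t"

lemma sp_act_eq: "sp_act A t = sp_num A t ** matrix_inv (sp_den A t)"
  by (simp add: sp_act_def sp_num_def sp_den_def)

lemma matrix_vector_mult_vstack_graph: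
  shows "A *v vstack z (Re_mat t *v z) = vstack (Re_mat (sp_den A t) *v z) (Re_mat (sp_num A t) *v z)"
    and "A *v vstack 0 (Im_mat t *v z) = vstack (Im_mat (sp_den A t) *v z) (Im_mat (sp_num A t) *v z)"
  by (simp_all add: sp_den_def sp_num_def matrix_vector_mult_vstack matrix_vector_mult_add_rdistrib
      matrix_vector_mult_diff_rdistrib matrix_vector_mul_assoc)

text \<open>The real and imaginary parts p, q of the complex vector (v, t v) are mapped by A into the
  Lagrangian subspace 0 \<times> \<real>^n when v lies in the kernel of a + b t, so \<omega>(p, q) = 0; but
  \<omega>(p, q) = -(u \<bullet> I u + w \<bullet> I w) for u + i w = v.\<close>

lemma sp_den_invertible:
  assumes "A \<in> Sp" and "t \<in> SH"
  shows "invertible (sp_den A t)"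
  unfolding invertible_iff_ker
proof (intro allI impI)
  fix v
  assume "sp_den A t *v v = 0"
  define u where "u = Re_vec v"
  define w where "w = Im_vec v"
  let ?R = "Re_mat t" and ?I = "Im_mat t"
  let ?M = "sp_den A t" and ?C = "sp_num A t"
  have Mu: "Re_mat ?M *v u - Im_mat ?M *v w = 0" and Mw: "Re_mat ?M *v w + Im_mat ?M *v u = 0"
    using arg_cong[OF \<open>?M *v v = 0\<close>, of Re_vec] arg_cong[OF \<open>?M *v v = 0\<close>, of Im_vec]
    by (simp_all add: Re_vec_mult Im_vec_mult u_def w_def)
  define p where "p = vstack u (?R *v u) - vstack 0 (?I *v w)"
  define q where "q = vstack w (?R *v w) + vstack 0 (?I *v u)"
  have Ap: "A *v p = vstack 0 (Re_mat ?C *v u - Im_mat ?C *v w)"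
    unfolding p_def matrix_vector_mult_diff_distrib
    by (simp only: matrix_vector_mult_vstack_graph vstack_diff Mu)
  have Aq: "A *v q = vstack 0 (Re_mat ?C *v w + Im_mat ?C *v u)"
    unfolding q_def matrix_vector_right_distrib
    by (simp only: matrix_vector_mult_vstack_graph vstack_add Mw)
  have "omega p q = omega (A *v p) (A *v q)"
    using \<open>A \<in> Sp\<close> by (simp add: Sp_def)
  also have "\<dots> = 0"
    by (simp add: Ap Aq omega_vstack)
  finally have "omega p q = 0" .
  moreover have "w \<bullet> (?R *v u) = u \<bullet> (?R *v w)"
    using \<open>t \<in> SH\<close> by (simp add: SH_iff transpose_eq_iff_inner_commute)
  ultimately have "u \<bullet> (?I *v u) + w \<bullet> (?I *v w) = 0"
    by (simp add: p_def q_def vstack_diff vstack_add omega_vstack algebra_simps inner_commute)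
  moreover have "pos_def_mat ?I"
    using \<open>t \<in> SH\<close> by (simp add: SH_iff)
  ultimately have "u = 0" "w = 0"
    by (metis add_nonneg_eq_0_iff pos_def_mat_def pos_def_mat_nonneg less_irrefl)+
  then show "v = 0"
    by (simp add: u_def w_def complex_vec_eq_0)
qed

lemma intertwines_taming_form_iff:
  fixes A :: "real^('m::finite + 'm)^('m + 'm)"
  assumes I1: "invertible I1" and I2: "invertible I2"
  shows "A ** taming_form R1 I1 = taming_form R2 I2 ** A \<longleftrightarrow>
    (\<forall>z. taming_form R2 I2 *v (A *v vstack 0 (I1 *v z)) = A *v vstack z (R1 *v z))"
  (is "A ** ?J1 = ?J2 ** A \<longleftrightarrow> (\<forall>z. ?J2 *v (A *v ?e z) = A *v ?f z)")
proof
  assume "A ** ?J1 = ?J2 ** A"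
  then show "\<forall>z. ?J2 *v (A *v ?e z) = A *v ?f z"
    by (metis matrix_vector_mul_assoc taming_form_graph[OF I1])
next
  assume graph: "\<forall>z. ?J2 *v (A *v ?e z) = A *v ?f z"
  show "A ** ?J1 = ?J2 ** A"
  proof (rule matrix_eq[THEN iffD2], intro allI)
    fix v :: "real^('m + 'm)"
    obtain x y where "v = vstack x y"
      using vstack_surj by blast
    define w where "w = matrix_inv I1 *v (y - R1 *v x)"
    have v: "v = ?f x + ?e w"
      by (simp add: \<open>v = vstack x y\<close> w_def vstack_add matrix_vector_mul_assoc matrix_inv_right[OF I1])
    have J1_f: "?J1 *v ?f x = - ?e x"
      by (metis taming_form_graph[OF I1] taming_form_apply_twice[OF I1])
    have "(A ** ?J1) *v v = - (A *v ?e x) + A *v ?f w"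
      by (simp add: v matrix_vector_right_distrib J1_f taming_form_graph[OF I1]
          flip: matrix_vector_mul_assoc)
    also have "\<dots> = (?J2 ** A) *v v"
      by (metis (no_types) graph v matrix_vector_right_distrib matrix_vector_mul_assoc
          taming_form_apply_twice[OF I2])
    finally show "(A ** ?J1) *v v = (?J2 ** A) *v v" .
  qed
qed

lemma sp_act_eq_iff_conj_taming_form:
  assumes A: "A \<in> Sp" and t: "t \<in> SH" and s: "s \<in> SH"
  shows "sp_act A t = s \<longleftrightarrow>
    A ** taming_form (Re_mat t) (Im_mat t) ** matrix_inv A = taming_form (Re_mat s) (Im_mat s)"
proof -
  let ?M = "sp_den A t" and ?C = "sp_num A t"
  let ?J1 = "taming_form (Re_mat t) (Im_mat t)" and ?J2 = "taming_form (Re_mat s) (Im_mat s)"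
  have t_inv: "invertible (Im_mat t)" and s_inv: "invertible (Im_mat s)"
    using t s by (simp_all add: SH_iff pos_def_mat_invertible)
  have "sp_act A t = s \<longleftrightarrow> ?C = s ** ?M"
    by (simp add: sp_act_eq mult_matrix_inv_eq_iff[OF sp_den_invertible[OF A t]])
  also have "\<dots> \<longleftrightarrow> Im_mat ?C = Re_mat s ** Im_mat ?M + Im_mat s ** Re_mat ?M \<and>
      Re_mat ?C = Re_mat s ** Re_mat ?M - Im_mat s ** Im_mat ?M"
    by (auto simp: complex_mat_eq_iff)
  also have "\<dots> \<longleftrightarrow> (\<forall>z. ?J2 *v vstack (Im_mat ?M *v z) (Im_mat ?C *v z)
                      = vstack (Re_mat ?M *v z) (Re_mat ?C *v z))"
    by (simp add: taming_form_apply_eq_iff[OF s_inv] matrix_eq matrix_vector_mult_add_rdistrib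
        matrix_vector_mult_diff_rdistrib matrix_vector_mul_assoc all_conj_distrib)
  also have "\<dots> \<longleftrightarrow> (\<forall>z. ?J2 *v (A *v vstack 0 (Im_mat t *v z)) = A *v vstack z (Re_mat t *v z))"
    by (simp add: matrix_vector_mult_vstack_graph)
  also have "\<dots> \<longleftrightarrow> A ** ?J1 = ?J2 ** A"
    by (rule intertwines_taming_form_iff[symmetric, OF t_inv s_inv])
  also have "\<dots> \<longleftrightarrow> A ** ?J1 ** matrix_inv A = ?J2"
    by (simp add: mult_matrix_inv_eq_iff[OF Sp_invertible[OF A]])
  finally show ?thesis .
qed

theorem proposition2p29:
  fixes V :: "(real^'n::finite) set"
    and G :: "real^'n \<Rightarrow> real^'n^'n"
    and J :: "real^'n \<Rightarrow> real^('m::finite + 'm)^('m + 'm)"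
    and N :: "real^'n \<Rightarrow> complex^'m^'m"
  assumes "open V"
    and "riemannian_metric V G"
    and "taming_map V J"
    and "N = mu J"
  shows "{(f, A). f \<in> Iso V G \<and> A \<in> Sp \<and> (\<forall>x\<in>V. sp_act A (N x) = N (f x))}
       = {(f, A). f \<in> Iso V G \<and> A \<in> Sp \<and> (\<forall>x\<in>V. A ** J x ** matrix_inv A = J (f x))}"
proof -
  have tame: "tame_cs (J x)" if "x \<in> V" for x
    using assms(3) that by (simp add: taming_map_def)
  have "sp_act A (N x) = N (f x) \<longleftrightarrow> A ** J x ** matrix_inv A = J (f x)"
    if "f \<in> Iso V G" "A \<in> Sp" "x \<in> V" for f A x
  proof -
    have "f x \<in> V"
      using that by (auto simp: Iso_def diffeo_on_def bij_betw_def)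
    then show ?thesis
      using sp_act_eq_iff_conj_taming_form[OF \<open>A \<in> Sp\<close>] mu_spec tame \<open>x \<in> V\<close> assms(4)
      by metis
  qed
  then show ?thesis
    by auto
qed

end
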